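(* Let $n=2m$ and let $G=(g[i,j])_{1\le i,j\le n}$ be a symmetric matrix of indeterminates ($g[i,j]=g[j,i]$). For distinct indices $i_1,\dots,i_n$ put $g[i_1,\dots,i_m\,|\,i_{m+1},\dots,i_n]=\det\big(g[i_p,i_{m+q}]\big)_{1\le p,q\le m}$. Let $\mathfrak S_n$ act by permuting indices, $g[i,j]\mapsto g[\sigma(i),\sigma(j)]$. Then the $\mathbb{Q}$-linear span of the orbit of $g[1,\dots,m\,|\,m+1,\dots,n]$ under $\mathfrak S_n$ is an irreducible representation of $\mathfrak S_n$ isomorphic to the Specht module of shape $[2^m]$; more precisely, the assignment $g[i_1,\dots,i_m\,|\,i_{m+1},\dots,i_n]\mapsto \Delta^x(i_1,\dots,i_m)\,\Delta^x(i_{m+1},\dots,i_n)$ extends to an $\mathfrak S_n$-equivariant linear isomorphism onto the span of the polynomials $\Delta^x(i_1,\dots,i_m)\Delta^x(i_{m+1},\dots,i_n)$.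
   Context: $\Delta^x(i_1,\dots,i_k)=\prod_{1\le p<q\le k}(x_{i_p}-x_{i_q})$; $\mathfrak S_n$ acts on polynomials in $x_1,\dots,x_n$ by $x_i\mapsto x_{\sigma(i)}$. The shape $[2^m]$ consists of $m$ rows of length $2$ (two columns of height $m$); its Specht module is the span of the polynomials $\Delta^x(i_1,\dots,i_m)\Delta^x(i_{m+1},\dots,i_n)$ for $(i_1,\dots,i_n)$ ranging over permutations of $1,\dots,n$. *)

theory Defs
  imports "HOL-Combinatorics.Permutations" "Jordan_Normal_Form.Determinant"
begin

(* Polynomials over Q are represented by their polynomial functions (Q is infinite,
   so this is faithful). A polynomial in the symmetric matrix of indeterminates
   g[i,j] = g[j,i] is a function of g :: nat => nat => rat that reads only the
   entries g i j with i <= j (the independent indeterminates). *)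

definition symm :: "(nat \<Rightarrow> nat \<Rightarrow> rat) \<Rightarrow> nat \<Rightarrow> nat \<Rightarrow> rat" where
  "symm g i j = g (min i j) (max i j)"

definition gbr :: "nat list \<Rightarrow> nat list \<Rightarrow> (nat \<Rightarrow> nat \<Rightarrow> rat) \<Rightarrow> rat" where
  "gbr is js g = det (mat (length is) (length is) (\<lambda>(p,q). symm g (is ! p) (js ! q)))"

definition Delta :: "nat list \<Rightarrow> (nat \<Rightarrow> rat) \<Rightarrow> rat" where
  "Delta is x = (\<Prod>(p,q)\<in>{(p,q). p < q \<and> q < length is}. x (is ! p) - x (is ! q))"

definition Sn :: "nat \<Rightarrow> (nat \<Rightarrow> nat) set" where
  "Sn n = {\<sigma>. \<sigma> permutes {1..n}}"

definition blk1 :: "nat \<Rightarrow> (nat \<Rightarrow> nat) \<Rightarrow> nat list" where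
  "blk1 m \<sigma> = map \<sigma> [1..<m+1]"

definition blk2 :: "nat \<Rightarrow> (nat \<Rightarrow> nat) \<Rightarrow> nat list" where
  "blk2 m \<sigma> = map \<sigma> [m+1..<2*m+1]"

definition gmono :: "nat \<Rightarrow> (nat \<Rightarrow> nat) \<Rightarrow> (nat \<Rightarrow> nat \<Rightarrow> rat) \<Rightarrow> rat" where
  "gmono m \<sigma> = gbr (blk1 m \<sigma>) (blk2 m \<sigma>)"

definition xmono :: "nat \<Rightarrow> (nat \<Rightarrow> nat) \<Rightarrow> (nat \<Rightarrow> rat) \<Rightarrow> rat" where
  "xmono m \<sigma> = (\<lambda>x. Delta (blk1 m \<sigma>) x * Delta (blk2 m \<sigma>) x)"

definition act_g :: "(nat \<Rightarrow> nat) \<Rightarrow> ((nat \<Rightarrow> nat \<Rightarrow> rat) \<Rightarrow> rat) \<Rightarrow> (nat \<Rightarrow> nat \<Rightarrow> rat) \<Rightarrow> rat" where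
  "act_g \<sigma> p = (\<lambda>g. p (\<lambda>i j. symm g (\<sigma> i) (\<sigma> j)))"

definition act_x :: "(nat \<Rightarrow> nat) \<Rightarrow> ((nat \<Rightarrow> rat) \<Rightarrow> rat) \<Rightarrow> (nat \<Rightarrow> rat) \<Rightarrow> rat" where
  "act_x \<sigma> p = (\<lambda>x. p (x \<circ> \<sigma>))"

definition qspan :: "('a \<Rightarrow> rat) set \<Rightarrow> ('a \<Rightarrow> rat) set" where
  "qspan B = {f. \<exists>S c. finite S \<and> S \<subseteq> B \<and> f = (\<lambda>x. \<Sum>b\<in>S. c b * b x)}"

definition qsubspace :: "('a \<Rightarrow> rat) set \<Rightarrow> bool" where
  "qsubspace W \<longleftrightarrow> (\<lambda>x. 0) \<in> W \<and> (\<forall>a\<in>W. \<forall>b\<in>W. (\<lambda>x. a x + b x) \<in> W)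
      \<and> (\<forall>c. \<forall>a\<in>W. (\<lambda>x. c * a x) \<in> W)"

definition qlinear_on :: "('a \<Rightarrow> rat) set \<Rightarrow> (('a \<Rightarrow> rat) \<Rightarrow> ('b \<Rightarrow> rat)) \<Rightarrow> bool" where
  "qlinear_on V \<Phi> \<longleftrightarrow> (\<forall>a\<in>V. \<forall>b\<in>V. \<Phi> (\<lambda>x. a x + b x) = (\<lambda>y. \<Phi> a y + \<Phi> b y))
      \<and> (\<forall>c. \<forall>a\<in>V. \<Phi> (\<lambda>x. c * a x) = (\<lambda>y. c * \<Phi> a y))"

definition Vg :: "nat \<Rightarrow> ((nat \<Rightarrow> nat \<Rightarrow> rat) \<Rightarrow> rat) set" where
  "Vg m = qspan (gmono m ` Sn (2*m))"

definition Specht2 :: "nat \<Rightarrow> ((nat \<Rightarrow> rat) \<Rightarrow> rat) set" where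
  "Specht2 m = qspan (xmono m ` Sn (2*m))"

end

(*
  Write g[sigma] for g[sigma 1, ..., sigma m | sigma (m+1), ..., sigma (2m)], V for their span, and C
  for the column group of the permutations preserving {1..m} and {m+1..2m}. Permuting the rows and
  columns of the determinant gives g[sigma pi] = sgn pi * g[sigma] for pi in C, and the crux is the
  converse: every C-antisymmetric element of V is a multiple of g[id]. By the Leibniz expansion, V
  lies in the span of the monomials prod g[i,j] over the perfect matchings {{i,j}} of {1..2m}, which
  are biorthogonal to the 0/1 indicator matrices P of the matchings. A C-antisymmetric function that
  vanishes at the indicator of the standard matching {{p, m+p}} vanishes at every P: either some
  pair of the matching lies inside one column, and the transposition of that pair changes the sign
  of the value but not P, or a column permutation carries the matching to the standard one.

  Irreducibility then follows as in James' submodule theorem, with the S_n-invariant form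
  <u, v> = sum over all P of u(P) v(P), which is positive definite on V and for which the
  C-antisymmetrizer K is self-adjoint. If K w <> 0 for some w in an invariant subspace W, then K w is
  a nonzero multiple of g[id] and W = V. If K kills W, then for w in W
  |C| <w, g[sigma]> = <sigma^-1 w, K g[id]> = <K (sigma^-1 w), g[id]> = 0, so <w, w> = 0 and W = 0.

  The isomorphism is the substitution g := X X^T, i.e. g[i,j] := sum_{k<m} x_i^k x_j^k, for the
  Vandermonde matrix X = (x_i^k): it maps g[I | J] to det X_I * det X_J = Delta(I) Delta(J), it is
  equivariant, and it is injective because its kernel is an invariant subspace not containing g[id].
*)
theory Submission
  imports Defs
begin

lemma symm_commute: "symm g i j = symm g j i"
  by (simp add: symm_def min.commute max.commute)

lemma symm_eq_self: "(\<And>i j. h i j = h j i) \<Longrightarrow> symm h = h"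
  by (intro ext) (simp add: symm_def min_def max_def)

lemma symm_symm_comp [simp]: "symm (\<lambda>i j. symm g (f i) (f j)) = (\<lambda>i j. symm g (f i) (f j))"
  by (rule symm_eq_self) (simp add: symm_commute)

lemma act_g_eq_comp: "act_g \<sigma> = (\<lambda>v. v \<circ> (\<lambda>g i j. symm g (\<sigma> i) (\<sigma> j)))"
  by (simp add: act_g_def fun_eq_iff)

lemma act_g_act_g: "act_g \<sigma> (act_g \<tau> v) = act_g (\<sigma> \<circ> \<tau>) v"
  by (simp add: act_g_def)

lemma Sn_id: "id \<in> Sn n"
  by (simp add: Sn_def permutes_id)

lemma Sn_comp: "\<sigma> \<in> Sn n \<Longrightarrow> \<tau> \<in> Sn n \<Longrightarrow> \<sigma> \<circ> \<tau> \<in> Sn n"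
  by (simp add: Sn_def permutes_compose)

lemma Sn_inv: "\<sigma> \<in> Sn n \<Longrightarrow> Hilbert_Choice.inv \<sigma> \<in> Sn n"
  by (simp add: Sn_def permutes_inv)

lemma Sn_bij: "\<sigma> \<in> Sn n \<Longrightarrow> bij \<sigma>"
  by (simp add: Sn_def permutes_bij)

lemma finite_Sn: "finite (Sn n)"
  by (simp add: Sn_def finite_permutations)

lemma Sn_comp_image: "\<sigma> \<in> Sn n \<Longrightarrow> (\<circ>) \<sigma> ` Sn n = Sn n"
  using image_compose_permutations_left[of \<sigma> "{1..n}"] by (auto simp: Sn_def)

section \<open>Rational linear spans\<close>

lemma qsubspace_zero: "qsubspace W \<Longrightarrow> (\<lambda>x. 0) \<in> W"
  and qsubspace_add: "qsubspace W \<Longrightarrow> a \<in> W \<Longrightarrow> b \<in> W \<Longrightarrow> (\<lambda>x. a x + b x) \<in> W"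
  and qsubspace_smult: "qsubspace W \<Longrightarrow> a \<in> W \<Longrightarrow> (\<lambda>x. c * a x) \<in> W"
  unfolding qsubspace_def by blast+

lemma qsubspace_diff:
  assumes "qsubspace W" "a \<in> W" "b \<in> W"
  shows "(\<lambda>x. a x - b x) \<in> W"
  using qsubspace_add[OF assms(1,2) qsubspace_smult[OF assms(1,3), of "-1"]] by simp

lemma qsubspace_sum:
  assumes W: "qsubspace W" and "finite I" and "\<And>i. i \<in> I \<Longrightarrow> f i \<in> W"
  shows "(\<lambda>x. \<Sum>i\<in>I. c i * f i x) \<in> W"
  using assms(2,3)
proof (induction I rule: finite_induct)
  case empty
  then show ?case using qsubspace_zero[OF W] by simp
next
  case (insert i I)
  then show ?case
    using qsubspace_add[OF W qsubspace_smult[OF W, of "f i" "c i"]] by simp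
qed

lemma qspan_superset: "b \<in> B \<Longrightarrow> b \<in> qspan B"
  unfolding qspan_def by (intro CollectI exI[of _ "{b}"] exI[of _ "\<lambda>_. 1"]) auto

lemma sum_extend_coeffs_by_zero:
  fixes c :: "('a \<Rightarrow> rat) \<Rightarrow> rat"
  assumes "finite T" "S \<subseteq> T"
  shows "(\<Sum>b\<in>S. c b * b x) = (\<Sum>b\<in>T. (if b \<in> S then c b else 0) * b x)"
proof -
  have "(\<Sum>b\<in>T. (if b \<in> S then c b else 0) * b x) = (\<Sum>b\<in>T. if b \<in> S then c b * b x else 0)"
    by (rule sum.cong) auto
  also have "\<dots> = (\<Sum>b\<in>T \<inter> S. c b * b x)"
    using assms(1) by (simp add: sum.inter_restrict)
  finally show ?thesis using assms(2) by (simp add: Int_absorb1)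
qed

lemma qsubspace_qspan: "qsubspace (qspan B)"
  unfolding qsubspace_def
proof (intro conjI ballI allI)
  show "(\<lambda>x. 0) \<in> qspan B"
    unfolding qspan_def by (intro CollectI exI[of _ "{}"]) auto
next
  fix a b assume "a \<in> qspan B" "b \<in> qspan B"
  then obtain S1 c1 S2 c2 where S: "finite S1" "S1 \<subseteq> B" "finite S2" "S2 \<subseteq> B"
    and a: "a = (\<lambda>x. \<Sum>b\<in>S1. c1 b * b x)" and b: "b = (\<lambda>x. \<Sum>b\<in>S2. c2 b * b x)"
    unfolding qspan_def by blast
  define c where "c b = (if b \<in> S1 then c1 b else 0) + (if b \<in> S2 then c2 b else 0)" for b
  have "a x + b x = (\<Sum>b\<in>S1 \<union> S2. c b * b x)" for x
    unfolding a b c_def using S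
    by (simp add: sum_extend_coeffs_by_zero[of "S1 \<union> S2" S1] sum_extend_coeffs_by_zero[of "S1 \<union> S2" S2]
        distrib_right sum.distrib)
  then show "(\<lambda>x. a x + b x) \<in> qspan B"
    unfolding qspan_def using S by (intro CollectI exI[of _ "S1 \<union> S2"] exI[of _ c]) auto
next
  fix k a assume "a \<in> qspan B"
  then obtain S c where S: "finite S" "S \<subseteq> B" and a: "a = (\<lambda>x. \<Sum>b\<in>S. c b * b x)"
    unfolding qspan_def by blast
  have "(\<lambda>x. k * a x) = (\<lambda>x. \<Sum>b\<in>S. (k * c b) * b x)"
    unfolding a by (simp add: sum_distrib_left mult.assoc)
  then show "(\<lambda>x. k * a x) \<in> qspan B"
    unfolding qspan_def using S by (intro CollectI exI[of _ S] exI[of _ "\<lambda>b. k * c b"]) auto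
qed

lemma qspan_least:
  assumes W: "qsubspace W" and "B \<subseteq> W"
  shows "qspan B \<subseteq> W"
proof
  fix v assume "v \<in> qspan B"
  then obtain S c where S: "finite S" "S \<subseteq> B" and v: "v = (\<lambda>x. \<Sum>b\<in>S. c b * b x)"
    unfolding qspan_def by blast
  show "v \<in> W"
    unfolding v by (intro qsubspace_sum[OF W S(1)]) (use S(2) assms(2) in blast)
qed

lemma qsubspace_image_comp: "qsubspace W \<Longrightarrow> qsubspace ((\<lambda>v. v \<circ> T) ` W)"
  unfolding qsubspace_def
proof (elim conjE, intro conjI ballI allI)
  assume W: "(\<lambda>x. 0) \<in> W" "\<forall>a\<in>W. \<forall>b\<in>W. (\<lambda>x. a x + b x) \<in> W" "\<forall>c. \<forall>a\<in>W. (\<lambda>x. c * a x) \<in> W"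
  show "(\<lambda>x. 0) \<in> (\<lambda>v. v \<circ> T) ` W"
    using W(1) by (auto intro!: image_eqI[of _ _ "\<lambda>x. 0"])
  show "(\<lambda>x. a x + b x) \<in> (\<lambda>v. v \<circ> T) ` W" if "a \<in> (\<lambda>v. v \<circ> T) ` W" "b \<in> (\<lambda>v. v \<circ> T) ` W" for a b
    using that W(2) by (auto intro!: image_eqI[of _ _ "\<lambda>x. _ x + _ x"])
  show "(\<lambda>x. c * a x) \<in> (\<lambda>v. v \<circ> T) ` W" if "a \<in> (\<lambda>v. v \<circ> T) ` W" for a c
    using that W(3) by (auto intro!: image_eqI[of _ _ "\<lambda>x. c * _ x"])
qed

lemma qsubspace_vimage_comp: "qsubspace W \<Longrightarrow> qsubspace {v. v \<circ> T \<in> W}"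
  unfolding qsubspace_def by (simp add: comp_def)

lemma image_comp_qspan: "(\<lambda>v. v \<circ> T) ` qspan B = qspan ((\<lambda>v. v \<circ> T) ` B)"
proof
  have "qspan B \<subseteq> {v. v \<circ> T \<in> qspan ((\<lambda>v. v \<circ> T) ` B)}"
    by (intro qspan_least qsubspace_vimage_comp qsubspace_qspan) (auto intro: qspan_superset)
  then show "(\<lambda>v. v \<circ> T) ` qspan B \<subseteq> qspan ((\<lambda>v. v \<circ> T) ` B)"
    by blast
  show "qspan ((\<lambda>v. v \<circ> T) ` B) \<subseteq> (\<lambda>v. v \<circ> T) ` qspan B"
    by (intro qspan_least qsubspace_image_comp qsubspace_qspan) (auto intro: qspan_superset)
qed

lemma qlinear_on_comp: "qlinear_on V (\<lambda>v. v \<circ> T)"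
  by (simp add: qlinear_on_def comp_def)

lemma inj_on_comp_if_kernel_trivial:
  assumes V: "qsubspace V" and ker: "\<And>v. v \<in> V \<Longrightarrow> v \<circ> T = (\<lambda>y. 0) \<Longrightarrow> v = (\<lambda>x. 0)"
  shows "inj_on (\<lambda>v. v \<circ> T) V"
proof (rule inj_onI)
  fix a b assume "a \<in> V" "b \<in> V" "a \<circ> T = b \<circ> T"
  then have "(\<lambda>x. a x - b x) = (\<lambda>x. 0)"
    using ker[OF qsubspace_diff[OF V]] by (simp add: fun_eq_iff)
  then show "a = b" by (simp add: fun_eq_iff)
qed

lemma qspan_eq_zero_if_biorthogonal:
  assumes u: "u \<in> qspan B"
    and dual: "\<And>b. b \<in> B \<Longrightarrow> \<exists>x\<in>X. \<forall>b'\<in>B. b' x = (if b' = b then 1 else 0)"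
    and vanish: "\<And>x. x \<in> X \<Longrightarrow> u x = 0"
  shows "u = (\<lambda>x. 0)"
proof -
  obtain S c where S: "finite S" "S \<subseteq> B" and u_eq: "u = (\<lambda>x. \<Sum>b\<in>S. c b * b x)"
    using u unfolding qspan_def by blast
  have "c b = 0" if b: "b \<in> S" for b
  proof -
    obtain x where "x \<in> X" and x: "\<forall>b'\<in>B. b' x = (if b' = b then 1 else 0)"
      using dual S b by blast
    have "u x = (\<Sum>b'\<in>S. c b' * (if b' = b then 1 else 0))"
      unfolding u_eq using S x by (intro sum.cong refl) (simp add: subset_iff)
    also have "\<dots> = c b"
      using S b by (simp add: if_distrib sum.delta cong: if_cong)
    finally show ?thesis using vanish[OF \<open>x \<in> X\<close>] by simp
  qed
  then show ?thesis unfolding u_eq by simp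
qed

lemma det_permute_rows_cols:
  fixes A :: "'a::comm_ring_1 mat"
  assumes A: "A \<in> carrier_mat n n" and \<alpha>: "\<alpha> permutes {0..<n}" and \<beta>: "\<beta> permutes {0..<n}"
  shows "det (mat n n (\<lambda>(i,j). A $$ (\<alpha> i, \<beta> j))) = signof \<alpha> * signof \<beta> * det A"
proof -
  define B where "B = mat n n (\<lambda>(i,j). A $$ (i, \<beta> j))"
  have B: "B \<in> carrier_mat n n" unfolding B_def by simp
  have \<alpha>_lt: "i < n \<Longrightarrow> \<alpha> i < n" for i
    using permutes_in_image[OF \<alpha>] by simp
  have \<beta>_lt: "i < n \<Longrightarrow> \<beta> i < n" for i
    using permutes_in_image[OF \<beta>] by simp
  have "transpose_mat B = mat n n (\<lambda>(i,j). transpose_mat A $$ (\<beta> i, j))"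
    by (rule eq_matI) (use A \<beta>_lt in \<open>auto simp: B_def\<close>)
  then have "det B = signof \<beta> * det A"
    using det_permute_rows[OF transpose_carrier_mat[THEN iffD2, OF A] \<beta>]
    by (simp add: det_transpose[OF A, symmetric] det_transpose[OF B, symmetric])
  moreover have "mat n n (\<lambda>(i,j). A $$ (\<alpha> i, \<beta> j)) = mat n n (\<lambda>(i,j). B $$ (\<alpha> i, j))"
    by (rule cong_mat) (auto simp: B_def \<alpha>_lt)
  ultimately show ?thesis
    using det_permute_rows[OF B \<alpha>] by simp
qed

lemma det_scale_rows:
  fixes A :: "'a::comm_ring_1 mat"
  assumes A: "A \<in> carrier_mat n n"
  shows "det (mat n n (\<lambda>(i,j). c i * A $$ (i,j))) = (\<Prod>i<n. c i) * det A"
proof -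
  have "det (mat n n (\<lambda>(i,j). c i * A $$ (i,j)))
      = (\<Sum>p\<in>{p. p permutes {0..<n}}. (\<Prod>i<n. c i) * (signof p * (\<Prod>i=0..<n. A $$ (i, p i))))"
    by (subst det_def'[of _ n])
       (auto intro!: sum.cong simp: permutes_in_image prod.distrib atLeast0LessThan algebra_simps)
  then show ?thesis
    by (simp add: det_def'[OF A] sum_distrib_left)
qed

(* Right multiplication by U replaces column j by column j minus x 0 times column j - 1. *)
lemma vandermonde_column_reduction:
  fixes x :: "nat \<Rightarrow> 'a::comm_ring_1" and n :: nat
  defines "U \<equiv> mat (Suc n) (Suc n) (\<lambda>(i,j). if i = j then 1 else if Suc i = j then - x 0 else 0)"
  shows "mat (Suc n) (Suc n) (\<lambda>(i,j). x i ^ j) * U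
    = four_block_mat (1\<^sub>m 1) (0\<^sub>m 1 n) (mat n 1 (\<lambda>_. 1)) (mat n n (\<lambda>(i,j). (x (Suc i) - x 0) * x (Suc i) ^ j))"
    (is "?V * U = ?B")
proof (rule eq_matI)
  fix i j assume "i < dim_row ?B" "j < dim_col ?B"
  then have i: "i < Suc n" and j: "j < Suc n" by auto
  have "(?V * U) $$ (i,j) = (\<Sum>k\<in>{0..<Suc n}. (if k = j then x i ^ k else 0) + (if Suc k = j then - x 0 * x i ^ k else 0))"
    using i j by (auto simp: scalar_prod_def U_def intro!: sum.cong)
  also have "\<dots> = x i ^ j + (\<Sum>k\<in>{0..<Suc n}. if Suc k = j then - x 0 * x i ^ k else 0)"
    using j by (simp add: sum.distrib)
  also have "\<dots> = (if j = 0 then 1 else (x i - x 0) * x i ^ (j - 1))"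
  proof (cases j)
    case (Suc j')
    have "(\<Sum>k\<in>{0..<Suc n}. if Suc k = j then - x 0 * x i ^ k else 0) = (\<Sum>k\<in>{0..<Suc n}. if k = j' then - x 0 * x i ^ k else 0)"
      using Suc by (intro sum.cong) auto
    also have "\<dots> = - x 0 * x i ^ j'"
      using Suc j by simp
    finally show ?thesis using Suc by (simp add: algebra_simps)
  qed simp
  also have "\<dots> = ?B $$ (i,j)"
    using i j by (cases i; cases j) (auto simp: four_block_mat_def)
  finally show "(?V * U) $$ (i,j) = ?B $$ (i,j)" .
qed (auto simp: U_def)

lemma det_vandermonde:
  fixes x :: "nat \<Rightarrow> 'a::idom"
  shows "det (mat n n (\<lambda>(i,j). x i ^ j)) = (\<Prod>j<n. \<Prod>i<j. x j - x i)"
proof (induction n arbitrary: x)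
  case 0
  then show ?case by (simp add: det_def)
next
  case (Suc n)
  define V where "V = mat (Suc n) (Suc n) (\<lambda>(i,j). x i ^ j)"
  define U :: "'a mat" where "U = mat (Suc n) (Suc n) (\<lambda>(i,j). if i = j then 1 else if Suc i = j then - x 0 else 0)"
  have V: "V \<in> carrier_mat (Suc n) (Suc n)" and U: "U \<in> carrier_mat (Suc n) (Suc n)"
    unfolding V_def U_def by auto
  have "det U = prod_list (diag_mat U)"
    by (rule det_upper_triangular[OF _ U]) (auto simp: upper_triangular_def U_def)
  also have "diag_mat U = map (\<lambda>_. 1) [0..<Suc n]"
    by (auto simp: diag_mat_def U_def simp del: upt_Suc intro!: map_cong)
  finally have detU: "det U = 1"
    by (simp add: map_replicate_const del: upt_Suc)
  have "det V = det (V * U)"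
    using det_mult[OF V U] detU by simp
  also have "\<dots> = det (mat n n (\<lambda>(i,j). (x (Suc i) - x 0) * x (Suc i) ^ j))"
    unfolding V_def U_def vandermonde_column_reduction
    by (subst det_four_block_mat_upper_right_zero[where n = 1 and m = n]) auto
  also have "mat n n (\<lambda>(i,j). (x (Suc i) - x 0) * x (Suc i) ^ j)
      = mat n n (\<lambda>(i,j). (x (Suc i) - x 0) * mat n n (\<lambda>(i,j). x (Suc i) ^ j) $$ (i,j))"
    by (rule cong_mat) auto
  also have "det \<dots> = (\<Prod>i<n. x (Suc i) - x 0) * (\<Prod>j<n. \<Prod>i<j. x (Suc j) - x (Suc i))"
    by (simp add: det_scale_rows Suc.IH)
  also have "\<dots> = (\<Prod>j<Suc n. \<Prod>i<j. x j - x i)"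
    by (simp add: prod.lessThan_Suc_shift prod.distrib del: prod.lessThan_Suc)
  finally show ?case unfolding V_def .
qed

lemma gmono_eq_det: "gmono m \<sigma> g = det (mat m m (\<lambda>(p,q). symm g (\<sigma> (Suc p)) (\<sigma> (Suc (m + q)))))"
  unfolding gmono_def gbr_def blk1_def blk2_def
  by (rule arg_cong[where f = det], rule cong_mat) (auto simp del: upt_Suc)

lemma act_g_gmono: "act_g \<sigma> (gmono m \<tau>) = gmono m (\<sigma> \<circ> \<tau>)"
  by (simp add: act_g_def gmono_eq_det fun_eq_iff)

lemma gmono_in_Vg: "\<sigma> \<in> Sn (2*m) \<Longrightarrow> gmono m \<sigma> \<in> Vg m"
  unfolding Vg_def by (rule qspan_superset) simp

lemma qsubspace_Vg: "qsubspace (Vg m)"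
  unfolding Vg_def by (rule qsubspace_qspan)

lemma act_g_image_Vg:
  assumes "\<sigma> \<in> Sn (2*m)"
  shows "act_g \<sigma> ` Vg m = Vg m"
proof -
  have "act_g \<sigma> ` Vg m = qspan (act_g \<sigma> ` gmono m ` Sn (2*m))"
    unfolding Vg_def act_g_eq_comp by (rule image_comp_qspan)
  also have "act_g \<sigma> ` gmono m ` Sn (2*m) = gmono m ` (\<circ>) \<sigma> ` Sn (2*m)"
    by (simp add: image_image act_g_gmono)
  finally show ?thesis
    by (simp add: Sn_comp_image[OF assms] Vg_def)
qed

section \<open>The column group\<close>

definition col_group :: "nat \<Rightarrow> (nat \<Rightarrow> nat) set" where
  "col_group m = {\<pi> \<in> Sn (2*m). \<pi> ` {1..m} = {1..m}}"

lemma col_group_Sn: "\<pi> \<in> col_group m \<Longrightarrow> \<pi> \<in> Sn (2*m)"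
  and col_group_image_first_col: "\<pi> \<in> col_group m \<Longrightarrow> \<pi> ` {1..m} = {1..m}"
  by (simp_all add: col_group_def)

lemma finite_col_group: "finite (col_group m)"
  using finite_subset[OF _ finite_Sn] col_group_Sn by blast

lemma id_col_group: "id \<in> col_group m"
  by (simp add: col_group_def Sn_id)

lemma col_group_comp:
  assumes "\<pi> \<in> col_group m" "\<tau> \<in> col_group m"
  shows "\<pi> \<circ> \<tau> \<in> col_group m"
proof -
  have "(\<pi> \<circ> \<tau>) ` {1..m} = \<pi> ` \<tau> ` {1..m}"
    by (simp only: image_comp)
  then show ?thesis
    using assms by (simp add: col_group_def Sn_comp)
qed

lemma col_group_inv:
  assumes "\<pi> \<in> col_group m"
  shows "Hilbert_Choice.inv \<pi> \<in> col_group m"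
proof -
  have "Hilbert_Choice.inv \<pi> ` {1..m} = Hilbert_Choice.inv \<pi> ` \<pi> ` {1..m}"
    using col_group_image_first_col[OF assms] by simp
  also have "\<dots> = {1..m}"
    by (rule image_inv_f_f[OF bij_is_inj[OF Sn_bij[OF col_group_Sn[OF assms]]]])
  finally show ?thesis
    using assms by (simp add: col_group_def Sn_inv)
qed

lemma col_group_permutation: "\<pi> \<in> col_group m \<Longrightarrow> permutation \<pi>"
  using permutes_imp_permutation[of "{1..2*m}" \<pi>] by (simp add: col_group_def Sn_def)

lemma signof_mult_self: "signof \<pi> * signof \<pi> = (1 :: 'a::ring_1)"
  by (simp flip: of_int_mult)

lemma col_group_image_second_col:
  assumes "\<pi> \<in> col_group m"
  shows "\<pi> ` {Suc m..2*m} = {Suc m..2*m}"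
proof -
  have "{Suc m..2*m} = {1..2*m} - {1..m}" by auto
  moreover have "\<pi> ` {1..2*m} = {1..2*m}"
    using col_group_Sn[OF assms] by (simp add: Sn_def permutes_image)
  ultimately show ?thesis
    using image_set_diff[OF bij_is_inj[OF Sn_bij[OF col_group_Sn[OF assms]]]]
      col_group_image_first_col[OF assms] by simp
qed

lemma transpose_col_group:
  assumes "a \<in> {1..m} \<and> b \<in> {1..m} \<or> a \<in> {Suc m..2*m} \<and> b \<in> {Suc m..2*m}"
  shows "Transposition.transpose a b \<in> col_group m"
proof -
  have "Transposition.transpose a b ` {1..m} = {1..m}"
    using assms by (auto simp: transpose_def)
  moreover have "Transposition.transpose a b permutes {1..2*m}"
    using assms by (intro permutes_swap_id) auto
  ultimately show ?thesis by (simp add: col_group_def Sn_def)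
qed

lemma permutes_interval_shift:
  fixes k n :: nat
  assumes "\<pi> permutes {k..<k+n}"
  obtains \<alpha> where "\<alpha> permutes {0..<n}" "sign \<alpha> = sign \<pi>" "\<And>i. i < n \<Longrightarrow> \<pi> (k + i) = k + \<alpha> i"
proof
  let ?\<alpha> = "map_permutation {k..<k+n} (\<lambda>i. i - k) \<pi>"
  have bij: "bij_betw (\<lambda>i. i - k) {k..<k+n} {0..<n}"
    by (rule bij_betwI[where g = "\<lambda>i. i + k"]) auto
  then show "?\<alpha> permutes {0..<n}"
    by (rule map_permutation_permutes[OF _ assms])
  show "sign ?\<alpha> = sign \<pi>"
    using bij assms by (intro sign_map_permutation) (auto simp: bij_betw_def)
  show "\<pi> (k + i) = k + ?\<alpha> i" if "i < n" for i
    using map_permutation_apply[of "\<lambda>i. i - k" "{k..<k+n}" "k + i" \<pi>] permutes_in_image[OF assms, of "k + i"]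
      bij that by (auto simp: bij_betw_def)
qed

lemma col_group_decompose:
  assumes \<pi>: "\<pi> \<in> col_group m"
  obtains \<alpha> \<beta> where "\<alpha> permutes {0..<m}" "\<beta> permutes {0..<m}" "sign \<pi> = sign \<alpha> * sign \<beta>"
    "\<And>i. i < m \<Longrightarrow> \<pi> (Suc i) = Suc (\<alpha> i)" "\<And>i. i < m \<Longrightarrow> \<pi> (Suc m + i) = Suc m + \<beta> i"
proof -
  let ?A = "{1..m}" and ?B = "{Suc m..2*m}"
  have inj: "inj \<pi>"
    by (rule bij_is_inj[OF Sn_bij[OF col_group_Sn[OF \<pi>]]])
  have "bij_betw \<pi> ?A ?A" "bij_betw \<pi> ?B ?B"
    using col_group_image_first_col[OF \<pi>] col_group_image_second_col[OF \<pi>] inj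
    by (auto simp: bij_betw_def intro: inj_on_subset)
  then have \<pi>A: "restrict_id \<pi> ?A permutes {1..<1+m}" and \<pi>B: "restrict_id \<pi> ?B permutes {Suc m..<Suc m+m}"
    using permutes_restrict_id by (auto simp: atLeastLessThanSuc_atLeastAtMost mult_2)
  have "\<pi> = restrict_id \<pi> ?A \<circ> restrict_id \<pi> ?B"
  proof
    fix x
    have "x \<notin> {1..2*m} \<Longrightarrow> \<pi> x = x"
      using col_group_Sn[OF \<pi>] by (auto simp: Sn_def permutes_not_in)
    moreover have "x \<in> ?B \<Longrightarrow> \<pi> x \<in> ?B"
      using col_group_image_second_col[OF \<pi>] by blast
    ultimately show "\<pi> x = (restrict_id \<pi> ?A \<circ> restrict_id \<pi> ?B) x"
      by (auto simp: restrict_id_def)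
  qed
  then have "sign \<pi> = sign (restrict_id \<pi> ?A) * sign (restrict_id \<pi> ?B)"
    by (metis \<pi>A \<pi>B finite_atLeastLessThan permutes_imp_permutation sign_compose)
  moreover obtain \<alpha> where "\<alpha> permutes {0..<m}" "sign \<alpha> = sign (restrict_id \<pi> ?A)"
      "\<And>i. i < m \<Longrightarrow> restrict_id \<pi> ?A (1 + i) = 1 + \<alpha> i"
    using permutes_interval_shift[OF \<pi>A] by blast
  moreover obtain \<beta> where "\<beta> permutes {0..<m}" "sign \<beta> = sign (restrict_id \<pi> ?B)"
      "\<And>i. i < m \<Longrightarrow> restrict_id \<pi> ?B (Suc m + i) = Suc m + \<beta> i"
    using permutes_interval_shift[OF \<pi>B] by blast
  ultimately show ?thesis
    by (intro that[of \<alpha> \<beta>]) auto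
qed

lemma gmono_col_group:
  assumes "\<pi> \<in> col_group m"
  shows "gmono m \<pi> g = signof \<pi> * gmono m id g"
proof -
  obtain \<alpha> \<beta> where \<alpha>: "\<alpha> permutes {0..<m}" and \<beta>: "\<beta> permutes {0..<m}"
    and sign: "sign \<pi> = sign \<alpha> * sign \<beta>"
    and \<pi>_fst: "\<And>i. i < m \<Longrightarrow> \<pi> (Suc i) = Suc (\<alpha> i)"
    and \<pi>_snd: "\<And>i. i < m \<Longrightarrow> \<pi> (Suc m + i) = Suc m + \<beta> i"
    using col_group_decompose[OF assms] by blast
  define A where "A = mat m m (\<lambda>(p,q). symm g (Suc p) (Suc (m + q)))"
  have "gmono m \<pi> g = det (mat m m (\<lambda>(p,q). A $$ (\<alpha> p, \<beta> q)))"
    unfolding gmono_eq_det A_def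
    by (rule arg_cong[where f = det], rule cong_mat)
       (use \<pi>_fst \<pi>_snd permutes_in_image[OF \<alpha>] permutes_in_image[OF \<beta>] in auto)
  also have "\<dots> = signof \<alpha> * signof \<beta> * det A"
    by (rule det_permute_rows_cols[OF _ \<alpha> \<beta>]) (simp add: A_def)
  finally show ?thesis
    by (simp add: sign gmono_eq_det A_def)
qed

definition col_antisymmetric :: "nat \<Rightarrow> ((nat \<Rightarrow> nat \<Rightarrow> rat) \<Rightarrow> rat) \<Rightarrow> bool" where
  "col_antisymmetric m u \<longleftrightarrow> (\<forall>\<pi>\<in>col_group m. act_g \<pi> u = (\<lambda>g. signof \<pi> * u g))"

lemma col_antisymmetric_gmono_id: "col_antisymmetric m (gmono m id)"
  by (simp add: col_antisymmetric_def act_g_gmono gmono_col_group fun_eq_iff)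

section \<open>Matching monomials and matching indicators\<close>

definition matching :: "nat \<Rightarrow> (nat \<Rightarrow> nat) \<Rightarrow> nat set set" where
  "matching m \<nu> = (\<lambda>p. \<nu> ` {p, m + p}) ` {1..m}"

definition matching_monomial :: "nat \<Rightarrow> (nat \<Rightarrow> nat) \<Rightarrow> (nat \<Rightarrow> nat \<Rightarrow> rat) \<Rightarrow> rat" where
  "matching_monomial m \<nu> g = (\<Prod>p\<in>{1..m}. symm g (\<nu> p) (\<nu> (m + p)))"

definition matching_indicator :: "nat \<Rightarrow> (nat \<Rightarrow> nat) \<Rightarrow> nat \<Rightarrow> nat \<Rightarrow> rat" where
  "matching_indicator m \<nu> i j = (if {i, j} \<in> matching m \<nu> then 1 else 0)"

lemma matching_monomial_subst:
  "matching_monomial m \<nu> (\<lambda>i j. symm g (\<sigma> i) (\<sigma> j)) = matching_monomial m (\<sigma> \<circ> \<nu>) g"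
  by (simp add: matching_monomial_def)

lemma matching_comp_pair_preserving:
  assumes "\<And>p. p \<in> {1..m} \<Longrightarrow> f ` {p, m + p} = {p, m + p}"
  shows "matching m (\<nu> \<circ> f) = matching m \<nu>"
  unfolding matching_def
proof (rule image_cong[OF refl])
  fix p assume "p \<in> {1..m}"
  have "(\<nu> \<circ> f) ` {p, m + p} = \<nu> ` f ` {p, m + p}"
    by (rule image_comp[symmetric])
  also have "f ` {p, m + p} = {p, m + p}"
    using assms[OF \<open>p \<in> {1..m}\<close>] .
  finally show "(\<nu> \<circ> f) ` {p, m + p} = \<nu> ` {p, m + p}" .
qed

lemma symm_matching_indicator: "symm (matching_indicator m \<nu>) = matching_indicator m \<nu>"
  by (rule symm_eq_self) (simp add: matching_indicator_def insert_commute)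

lemma matching_indicator_cong: "matching m \<nu> = matching m \<nu>' \<Longrightarrow> matching_indicator m \<nu> = matching_indicator m \<nu>'"
  by (simp add: matching_indicator_def fun_eq_iff)

lemma act_g_at_matching_indicator:
  assumes "bij \<sigma>"
  shows "act_g \<sigma> u (matching_indicator m \<nu>) = u (matching_indicator m (Hilbert_Choice.inv \<sigma> \<circ> \<nu>))"
proof -
  let ?\<sigma>' = "Hilbert_Choice.inv \<sigma>"
  have inj_img: "inj ((`) ?\<sigma>')"
    using bij_is_inj[OF bij_imp_bij_inv[OF assms]] by (simp add: inj_def inj_image_eq_iff)
  have matching_inv: "matching m (?\<sigma>' \<circ> \<nu>) = (`) ?\<sigma>' ` matching m \<nu>"
    by (simp add: matching_def image_image image_comp)
  have "{\<sigma> i, \<sigma> j} \<in> matching m \<nu> \<longleftrightarrow> {i, j} \<in> matching m (?\<sigma>' \<circ> \<nu>)" for i j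
  proof -
    have "{\<sigma> i, \<sigma> j} \<in> matching m \<nu> \<longleftrightarrow> ?\<sigma>' ` {\<sigma> i, \<sigma> j} \<in> (`) ?\<sigma>' ` matching m \<nu>"
      by (rule inj_image_mem_iff[OF inj_img, symmetric])
    then show ?thesis
      unfolding matching_inv by (simp add: inv_f_f[OF bij_is_inj[OF assms]])
  qed
  then have "(\<lambda>i j. symm (matching_indicator m \<nu>) (\<sigma> i) (\<sigma> j)) = matching_indicator m (?\<sigma>' \<circ> \<nu>)"
    by (simp add: symm_matching_indicator matching_indicator_def fun_eq_iff)
  then show ?thesis
    by (simp add: act_g_def)
qed

lemma prod_indicator:
  "finite A \<Longrightarrow> (\<Prod>x\<in>A. if P x then 1 else 0 :: 'a::comm_semiring_1) = (if \<forall>x\<in>A. P x then 1 else 0)"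
  by (induction A rule: finite_induct) auto

lemma matching_monomial_at_indicator:
  "matching_monomial m \<nu>' (matching_indicator m \<nu>) = (if matching m \<nu>' \<subseteq> matching m \<nu> then 1 else 0)"
  unfolding matching_monomial_def symm_matching_indicator
  by (simp add: matching_indicator_def prod_indicator) (auto simp: matching_def)

lemma inj_on_matching_edges:
  fixes m :: nat
  assumes "inj \<nu>"
  shows "inj_on (\<lambda>p. \<nu> ` {p, m + p}) {1..m}"
proof
  fix p q assume "p \<in> {1..m}" "q \<in> {1..m}" "\<nu> ` {p, m + p} = \<nu> ` {q, m + q}"
  then have "{p, m + p} = {q, m + q}"
    by (simp only: inj_image_eq_iff[OF assms])
  then have "p \<in> {q, m + q}"
    by blast
  with \<open>p \<in> {1..m}\<close> \<open>q \<in> {1..m}\<close> show "p = q"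
    by auto
qed

lemma card_matching: "inj \<nu> \<Longrightarrow> card (matching m \<nu>) = m"
  unfolding matching_def by (subst card_image[OF inj_on_matching_edges]) auto

lemma matching_monomial_eq_prod_matching:
  assumes "inj \<nu>"
  shows "matching_monomial m \<nu> g = (\<Prod>e\<in>matching m \<nu>. g (Min e) (Max e))"
  unfolding matching_def matching_monomial_def
  by (subst prod.reindex[OF inj_on_matching_edges[OF assms]]) (simp add: symm_def)

lemma matching_monomial_eq_if_matching_subset:
  assumes "inj \<nu>" "inj \<nu>'" "matching m \<nu>' \<subseteq> matching m \<nu>"
  shows "matching_monomial m \<nu>' = matching_monomial m \<nu>"
proof -
  have "matching m \<nu>' = matching m \<nu>"
  proof (rule card_subset_eq)
    show "finite (matching m \<nu>)"
      by (simp add: matching_def)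
    show "card (matching m \<nu>') = card (matching m \<nu>)"
      using assms(1,2) by (simp add: card_matching)
  qed (rule assms(3))
  then show ?thesis
    using assms by (simp add: fun_eq_iff matching_monomial_eq_prod_matching)
qed

lemma matching_monomial_biorthogonal:
  assumes "inj \<nu>" "inj \<nu>'"
  shows "matching_monomial m \<nu>' (matching_indicator m \<nu>)
    = (if matching_monomial m \<nu>' = matching_monomial m \<nu> then 1 else 0)"
proof (cases "matching m \<nu>' \<subseteq> matching m \<nu>")
  case True
  then have "matching_monomial m \<nu>' = matching_monomial m \<nu>"
    using assms by (intro matching_monomial_eq_if_matching_subset)
  then show ?thesis
    using True by (simp add: matching_monomial_at_indicator)
next
  case False
  have "matching_monomial m \<nu> (matching_indicator m \<nu>) = 1"
    by (simp add: matching_monomial_at_indicator)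
  moreover have "matching_monomial m \<nu>' (matching_indicator m \<nu>) = 0"
    using False by (simp add: matching_monomial_at_indicator)
  ultimately have "matching_monomial m \<nu>' \<noteq> matching_monomial m \<nu>"
    by auto
  then show ?thesis
    using False by (simp add: matching_monomial_at_indicator)
qed

lemma eq_zero_if_vanishes_at_matching_indicators:
  assumes "u \<in> qspan (matching_monomial m ` Sn (2*m))"
    and "\<And>\<nu>. \<nu> \<in> Sn (2*m) \<Longrightarrow> u (matching_indicator m \<nu>) = 0"
  shows "u = (\<lambda>g. 0)"
proof (rule qspan_eq_zero_if_biorthogonal[OF assms(1)])
  fix b assume "b \<in> matching_monomial m ` Sn (2*m)"
  then obtain \<nu> where \<nu>: "\<nu> \<in> Sn (2*m)" "b = matching_monomial m \<nu>" by blast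
  show "\<exists>x\<in>matching_indicator m ` Sn (2*m). \<forall>b'\<in>matching_monomial m ` Sn (2*m). b' x = (if b' = b then 1 else 0)"
    using \<nu> by (auto simp: matching_monomial_biorthogonal Sn_bij bij_is_inj)
qed (use assms(2) in auto)

definition second_col_perm :: "nat \<Rightarrow> (nat \<Rightarrow> nat) \<Rightarrow> nat \<Rightarrow> nat" where
  "second_col_perm m \<alpha> = map_permutation {0..<m} ((+) (Suc m)) \<alpha>"

lemma second_col_perm_permutes:
  assumes "\<alpha> permutes {0..<m}"
  shows "second_col_perm m \<alpha> permutes {Suc m..<Suc m + m}"
  unfolding second_col_perm_def
proof (rule map_permutation_permutes[OF _ assms])
  show "bij_betw ((+) (Suc m)) {0..<m} {Suc m..<Suc m + m}"
    by (rule bij_betwI[where g = "\<lambda>i. i - Suc m"]) auto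
qed

lemma second_col_perm_Sn: "\<alpha> permutes {0..<m} \<Longrightarrow> second_col_perm m \<alpha> \<in> Sn (2*m)"
  unfolding Sn_def by (rule CollectI, rule permutes_subset[OF second_col_perm_permutes]) auto

lemma second_col_perm_first_col: "\<alpha> permutes {0..<m} \<Longrightarrow> j \<le> m \<Longrightarrow> second_col_perm m \<alpha> j = j"
  using permutes_not_in[OF second_col_perm_permutes] by simp

lemma second_col_perm_second_col: "i < m \<Longrightarrow> second_col_perm m \<alpha> (Suc (m + i)) = Suc (m + \<alpha> i)"
  using map_permutation_apply[of "(+) (Suc m)" "{0..<m}" i \<alpha>] by (simp add: second_col_perm_def)

lemma gmono_id_leibniz:
  "gmono m id g = (\<Sum>\<alpha>\<in>{\<alpha>. \<alpha> permutes {0..<m}}. signof \<alpha> * matching_monomial m (second_col_perm m \<alpha>) g)"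
proof -
  have "gmono m id g = (\<Sum>\<alpha>\<in>{\<alpha>. \<alpha> permutes {0..<m}}. signof \<alpha> * (\<Prod>i<m. symm g (Suc i) (Suc (m + \<alpha> i))))"
    unfolding gmono_eq_det
    by (subst det_def'[of _ m]) (auto simp: atLeast0LessThan permutes_in_image intro!: sum.cong prod.cong)
  also have "\<dots> = (\<Sum>\<alpha>\<in>{\<alpha>. \<alpha> permutes {0..<m}}. signof \<alpha> * matching_monomial m (second_col_perm m \<alpha>) g)"
  proof (intro sum.cong refl arg_cong2[where f = "(*)"])
    fix \<alpha> assume \<alpha>: "\<alpha> \<in> {\<alpha>. \<alpha> permutes {0..<m}}"
    have "matching_monomial m (second_col_perm m \<alpha>) g
        = (\<Prod>i<m. symm g (second_col_perm m \<alpha> (Suc i)) (second_col_perm m \<alpha> (Suc (m + i))))"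
      by (simp add: matching_monomial_def prod.atLeast1_atMost_eq)
    also have "\<dots> = (\<Prod>i<m. symm g (Suc i) (Suc (m + \<alpha> i)))"
      using \<alpha> by (intro prod.cong refl) (simp add: second_col_perm_first_col second_col_perm_second_col)
    finally show "(\<Prod>i<m. symm g (Suc i) (Suc (m + \<alpha> i))) = matching_monomial m (second_col_perm m \<alpha>) g"
      by simp
  qed
  finally show ?thesis .
qed

lemma gmono_in_span_matching_monomials:
  assumes \<sigma>: "\<sigma> \<in> Sn (2*m)"
  shows "gmono m \<sigma> \<in> qspan (matching_monomial m ` Sn (2*m))"
proof -
  have "gmono m \<sigma> = act_g \<sigma> (gmono m id)"
    by (simp add: act_g_gmono)
  also have "\<dots> = (\<lambda>g. \<Sum>\<alpha>\<in>{\<alpha>. \<alpha> permutes {0..<m}}. signof \<alpha> * matching_monomial m (\<sigma> \<circ> second_col_perm m \<alpha>) g)"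
    by (simp add: act_g_def gmono_id_leibniz matching_monomial_subst)
  also have "\<dots> \<in> qspan (matching_monomial m ` Sn (2*m))"
    by (intro qsubspace_sum qsubspace_qspan qspan_superset imageI Sn_comp[OF \<sigma> second_col_perm_Sn])
       (simp_all add: finite_permutations)
  finally show ?thesis .
qed

lemma Vg_subset_span_matching_monomials: "Vg m \<subseteq> qspan (matching_monomial m ` Sn (2*m))"
  unfolding Vg_def
  by (intro qspan_least qsubspace_qspan) (auto intro: gmono_in_span_matching_monomials)

lemma col_antisymmetric_at_indicator:
  assumes "col_antisymmetric m u" "\<pi> \<in> col_group m"
  shows "u (matching_indicator m (Hilbert_Choice.inv \<pi> \<circ> \<nu>)) = signof \<pi> * u (matching_indicator m \<nu>)"
proof -
  have "act_g \<pi> u = (\<lambda>g. signof \<pi> * u g)"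
    using assms unfolding col_antisymmetric_def by blast
  then show ?thesis
    using act_g_at_matching_indicator[OF Sn_bij[OF col_group_Sn[OF assms(2)]], of u m \<nu>] by simp
qed

lemma col_antisymmetric_vanishes_if_edge_within_col:
  assumes u: "col_antisymmetric m u" and \<nu>: "\<nu> \<in> Sn (2*m)" and p: "p \<in> {1..m}"
    and same_col: "(\<nu> p \<le> m) = (\<nu> (m + p) \<le> m)"
  shows "u (matching_indicator m \<nu>) = 0"
proof -
  let ?\<tau> = "Transposition.transpose (\<nu> p) (\<nu> (m + p))"
  have "\<nu> p \<in> {1..2*m}" "\<nu> (m + p) \<in> {1..2*m}"
    using p permutes_in_image[of \<nu> "{1..2*m}"] \<nu> by (auto simp: Sn_def)
  then have \<tau>: "?\<tau> \<in> col_group m"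
    using same_col by (intro transpose_col_group) auto
  have "p \<noteq> m + p"
    using p by simp
  then have "\<nu> p \<noteq> \<nu> (m + p)"
    by (simp add: inj_eq[OF bij_is_inj[OF Sn_bij[OF \<nu>]]])
  then have sign_\<tau>: "signof ?\<tau> = (-1 :: rat)"
    by (simp add: sign_swap_id)
  have "Transposition.transpose p (m + p) ` {q, m + q} = {q, m + q}" if "q \<in> {1..m}" for q
    using p that by (cases "q = p") (auto simp: transpose_def)
  then have "matching m (\<nu> \<circ> Transposition.transpose p (m + p)) = matching m \<nu>"
    by (rule matching_comp_pair_preserving)
  moreover have "Hilbert_Choice.inv ?\<tau> \<circ> \<nu> = \<nu> \<circ> Transposition.transpose p (m + p)"
    using transpose_comp_eq[OF Sn_bij[OF \<nu>], of "\<nu> p" "\<nu> (m + p)"]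
    by (simp add: inv_f_f[OF bij_is_inj[OF Sn_bij[OF \<nu>]]])
  ultimately have "matching_indicator m (Hilbert_Choice.inv ?\<tau> \<circ> \<nu>) = matching_indicator m \<nu>"
    by (intro matching_indicator_cong) simp
  then have "u (matching_indicator m \<nu>) = - u (matching_indicator m \<nu>)"
    using col_antisymmetric_at_indicator[OF u \<tau>, of \<nu>] sign_\<tau> by simp
  then show ?thesis by simp
qed

definition pair_swap :: "nat \<Rightarrow> nat set \<Rightarrow> nat \<Rightarrow> nat" where
  "pair_swap m S i = (if i \<in> S then m + i else if m < i \<and> i - m \<in> S then i - m else i)"

lemma pair_swap_involution: "S \<subseteq> {1..m} \<Longrightarrow> pair_swap m S \<circ> pair_swap m S = id"
  by (auto simp: pair_swap_def fun_eq_iff)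

lemma pair_swap_pair:
  assumes "S \<subseteq> {1..m}" "p \<in> {1..m}"
  shows "pair_swap m S ` {p, m + p} = {p, m + p}"
proof -
  have "pair_swap m S p = (if p \<in> S then m + p else p)"
    and "pair_swap m S (m + p) = (if p \<in> S then p else m + p)"
    using assms by (auto simp: pair_swap_def)
  then show ?thesis
    by auto
qed

lemma pair_swap_permutes:
  assumes "S \<subseteq> {1..m}"
  shows "pair_swap m S permutes {1..2*m}"
proof -
  have "bij (pair_swap m S)"
    by (rule o_bij[OF pair_swap_involution[OF assms] pair_swap_involution[OF assms]])
  moreover have "pair_swap m S i = i" if "i \<notin> {1..2*m}" for i
    using assms that by (auto simp: pair_swap_def subset_iff)
  ultimately show ?thesis
    by (simp add: permutes_def bij_iff)
qed

lemma col_group_moves_split_matching_to_standard: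
  assumes \<nu>: "\<nu> \<in> Sn (2*m)" and split: "\<And>p. p \<in> {1..m} \<Longrightarrow> (\<nu> p \<le> m) \<noteq> (\<nu> (m + p) \<le> m)"
  obtains \<pi> where "\<pi> \<in> col_group m" "matching m (Hilbert_Choice.inv \<pi> \<circ> \<nu>) = matching m id"
proof -
  define S where "S = {p \<in> {1..m}. m < \<nu> p}"
  let ?f = "pair_swap m S"
  have S: "S \<subseteq> {1..m}"
    by (auto simp: S_def)
  have \<pi>_Sn: "\<nu> \<circ> ?f \<in> Sn (2*m)"
    using \<nu> pair_swap_permutes[OF S] by (simp add: Sn_def permutes_compose)
  have \<nu>_range: "\<nu> i \<in> {1..2*m}" if "i \<in> {1..2*m}" for i
    using that \<nu> permutes_in_image[of \<nu> "{1..2*m}"] by (simp add: Sn_def)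
  have "\<nu> (?f i) \<in> {1..m}" if i: "i \<in> {1..m}" for i
  proof (cases "m < \<nu> i")
    case True
    then show ?thesis
      using split[OF i] i \<nu>_range[of "m + i"] by (simp add: pair_swap_def S_def)
  next
    case False
    then show ?thesis
      using i \<nu>_range[of i] by (simp add: pair_swap_def S_def)
  qed
  then have "(\<nu> \<circ> ?f) ` {1..m} \<subseteq> {1..m}"
    by auto
  moreover have "inj_on (\<nu> \<circ> ?f) {1..m}"
    using bij_is_inj[OF Sn_bij[OF \<pi>_Sn]] by (rule inj_on_subset) simp
  ultimately have "\<nu> \<circ> ?f \<in> col_group m"
    using \<pi>_Sn endo_inj_surj[of "{1..m}" "\<nu> \<circ> ?f"] by (simp add: col_group_def)
  moreover have "Hilbert_Choice.inv (\<nu> \<circ> ?f) \<circ> \<nu> = ?f"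
    using Sn_bij[OF \<nu>] o_bij[OF pair_swap_involution[OF S] pair_swap_involution[OF S]]
      inv_unique_comp[OF pair_swap_involution[OF S] pair_swap_involution[OF S]]
    by (simp add: o_inv_distrib o_assoc bij_is_inj inv_o_cancel)
  moreover have "matching m ?f = matching m id"
    using matching_comp_pair_preserving[of m ?f id] pair_swap_pair[OF S] by simp
  ultimately show ?thesis
    by (intro that[of "\<nu> \<circ> ?f"]) simp_all
qed

lemma col_antisymmetric_vanishes_at_indicators:
  assumes u: "col_antisymmetric m u" and u_std: "u (matching_indicator m id) = 0" and \<nu>: "\<nu> \<in> Sn (2*m)"
  shows "u (matching_indicator m \<nu>) = 0"
proof (cases "\<exists>p\<in>{1..m}. (\<nu> p \<le> m) = (\<nu> (m + p) \<le> m)")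
  case True
  then show ?thesis
    using col_antisymmetric_vanishes_if_edge_within_col[OF u \<nu>] by blast
next
  case False
  then obtain \<pi> where \<pi>: "\<pi> \<in> col_group m" "matching m (Hilbert_Choice.inv \<pi> \<circ> \<nu>) = matching m id"
    using col_group_moves_split_matching_to_standard[OF \<nu>] by blast
  have "signof \<pi> * u (matching_indicator m \<nu>) = u (matching_indicator m (Hilbert_Choice.inv \<pi> \<circ> \<nu>))"
    using col_antisymmetric_at_indicator[OF u \<pi>(1)] by simp
  also have "\<dots> = 0"
    using matching_indicator_cong[OF \<pi>(2)] u_std by simp
  finally show ?thesis by simp
qed

lemma gmono_id_at_indicator: "gmono m id (matching_indicator m id) = 1"
proof -
  have "{Suc p, Suc (m + q)} \<in> matching m id \<longleftrightarrow> p = q" if "p < m" "q < m" for p q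
  proof
    assume "{Suc p, Suc (m + q)} \<in> matching m id"
    then obtain r where "r \<in> {1..m}" "{Suc p, Suc (m + q)} = {r, m + r}"
      by (auto simp: matching_def)
    then show "p = q"
      using that by (auto simp: doubleton_eq_iff)
  next
    assume "p = q"
    then show "{Suc p, Suc (m + q)} \<in> matching m id"
      using that by (auto simp: matching_def intro!: image_eqI[of _ _ "Suc p"])
  qed
  then have "mat m m (\<lambda>(p,q). symm (matching_indicator m id) (Suc p) (Suc (m + q))) = 1\<^sub>m m"
    by (intro eq_matI) (auto simp: symm_matching_indicator matching_indicator_def)
  then show ?thesis
    by (simp add: gmono_eq_det)
qed

lemma col_antisymmetric_in_Vg:
  assumes v: "v \<in> Vg m" and anti: "col_antisymmetric m v"
  shows "v = (\<lambda>g. v (matching_indicator m id) * gmono m id g)"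
proof -
  define c where "c = v (matching_indicator m id)"
  define u where "u = (\<lambda>g. v g - c * gmono m id g)"
  have u_Vg: "u \<in> Vg m"
    unfolding u_def
    by (intro qsubspace_diff qsubspace_smult qsubspace_Vg v gmono_in_Vg Sn_id)
  have u_anti: "col_antisymmetric m u"
    unfolding col_antisymmetric_def
  proof
    fix \<pi> assume "\<pi> \<in> col_group m"
    then have "act_g \<pi> v g = signof \<pi> * v g" "act_g \<pi> (gmono m id) g = signof \<pi> * gmono m id g" for g
      using anti col_antisymmetric_gmono_id unfolding col_antisymmetric_def by simp_all
    then show "act_g \<pi> u = (\<lambda>g. signof \<pi> * u g)"
      unfolding act_g_def u_def by (simp add: right_diff_distrib mult.left_commute)
  qed
  have u_std: "u (matching_indicator m id) = 0"
    by (simp add: u_def c_def gmono_id_at_indicator)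
  have "u = (\<lambda>g. 0)"
    by (rule eq_zero_if_vanishes_at_matching_indicators[OF subsetD[OF Vg_subset_span_matching_monomials u_Vg]])
       (rule col_antisymmetric_vanishes_at_indicators[OF u_anti u_std])
  then have "v = (\<lambda>g. c * gmono m id g)"
    by (simp add: u_def fun_eq_iff)
  then show ?thesis
    by (simp only: c_def)
qed

section \<open>Irreducibility\<close>

definition col_antisymmetrizer :: "nat \<Rightarrow> ((nat \<Rightarrow> nat \<Rightarrow> rat) \<Rightarrow> rat) \<Rightarrow> (nat \<Rightarrow> nat \<Rightarrow> rat) \<Rightarrow> rat" where
  "col_antisymmetrizer m w = (\<lambda>g. \<Sum>\<pi>\<in>col_group m. signof \<pi> * act_g \<pi> w g)"

lemma col_antisymmetrizer_mem:
  assumes W: "qsubspace W" and inv: "\<forall>\<sigma>\<in>Sn (2*m). \<forall>w\<in>W. act_g \<sigma> w \<in> W" and w: "w \<in> W"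
  shows "col_antisymmetrizer m w \<in> W"
  unfolding col_antisymmetrizer_def
  using inv w col_group_Sn by (intro qsubspace_sum[OF W finite_col_group]) blast

lemma bij_betw_comp_col_group:
  assumes "\<pi> \<in> col_group m"
  shows "bij_betw ((\<circ>) \<pi>) (col_group m) (col_group m)"
proof (rule bij_betwI[where g = "(\<circ>) (Hilbert_Choice.inv \<pi>)"])
  have bij: "bij \<pi>"
    by (rule Sn_bij[OF col_group_Sn[OF assms]])
  show "((\<circ>) \<pi>) \<in> col_group m \<rightarrow> col_group m" "((\<circ>) (Hilbert_Choice.inv \<pi>)) \<in> col_group m \<rightarrow> col_group m"
    using assms col_group_comp col_group_inv by blast+
  show "Hilbert_Choice.inv \<pi> \<circ> (\<pi> \<circ> \<tau>) = \<tau>" for \<tau>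
    using bij by (simp add: o_assoc bij_is_inj inv_o_cancel)
  show "\<pi> \<circ> (Hilbert_Choice.inv \<pi> \<circ> \<tau>) = \<tau>" for \<tau>
    using surj_iff[THEN iffD1, OF bij_is_surj[OF bij]] by (simp add: o_assoc)
qed

lemma bij_betw_inv_col_group: "bij_betw Hilbert_Choice.inv (col_group m) (col_group m)"
  by (rule bij_betwI[where g = Hilbert_Choice.inv])
     (auto simp: col_group_inv inv_inv_eq[OF Sn_bij[OF col_group_Sn]])

lemma col_antisymmetric_col_antisymmetrizer: "col_antisymmetric m (col_antisymmetrizer m w)"
  unfolding col_antisymmetric_def
proof
  fix \<pi> assume \<pi>: "\<pi> \<in> col_group m"
  show "act_g \<pi> (col_antisymmetrizer m w) = (\<lambda>g. signof \<pi> * col_antisymmetrizer m w g)"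
  proof
    fix g
    have "act_g \<pi> (col_antisymmetrizer m w) g = (\<Sum>\<tau>\<in>col_group m. signof \<tau> * act_g (\<pi> \<circ> \<tau>) w g)"
      by (simp add: col_antisymmetrizer_def act_g_act_g[symmetric]) (simp add: act_g_def)
    also have "\<dots> = (\<Sum>\<tau>\<in>col_group m. signof \<pi> * (signof (\<pi> \<circ> \<tau>) * act_g (\<pi> \<circ> \<tau>) w g))"
      using \<pi> by (intro sum.cong refl)
         (simp add: sign_compose col_group_permutation col_group_comp signof_mult_self mult.assoc[symmetric])
    also have "\<dots> = signof \<pi> * (\<Sum>\<tau>\<in>col_group m. signof (\<pi> \<circ> \<tau>) * act_g (\<pi> \<circ> \<tau>) w g)"
      by (simp add: sum_distrib_left)
    also have "\<dots> = signof \<pi> * (\<Sum>\<tau>\<in>col_group m. signof \<tau> * act_g \<tau> w g)"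
      using sum.reindex_bij_betw[OF bij_betw_comp_col_group[OF \<pi>], of "\<lambda>\<tau>. signof \<tau> * act_g \<tau> w g"]
      by simp
    finally show "act_g \<pi> (col_antisymmetrizer m w) g = signof \<pi> * col_antisymmetrizer m w g"
      by (simp add: col_antisymmetrizer_def)
  qed
qed

lemma col_antisymmetrizer_col_antisymmetric:
  assumes "col_antisymmetric m u"
  shows "col_antisymmetrizer m u = (\<lambda>g. of_nat (card (col_group m)) * u g)"
proof -
  have "signof \<pi> * act_g \<pi> u g = u g" if "\<pi> \<in> col_group m" for \<pi> g
    using assms that unfolding col_antisymmetric_def by (simp add: signof_mult_self mult.assoc[symmetric])
  then show ?thesis
    by (simp add: col_antisymmetrizer_def)
qed

definition indicator_pairing :: "nat \<Rightarrow> ((nat \<Rightarrow> nat \<Rightarrow> rat) \<Rightarrow> rat) \<Rightarrow> ((nat \<Rightarrow> nat \<Rightarrow> rat) \<Rightarrow> rat) \<Rightarrow> rat" where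
  "indicator_pairing m u v = (\<Sum>\<nu>\<in>Sn (2*m). u (matching_indicator m \<nu>) * v (matching_indicator m \<nu>))"

lemma indicator_pairing_commute: "indicator_pairing m u v = indicator_pairing m v u"
  by (simp add: indicator_pairing_def mult.commute)

lemma indicator_pairing_sum_right:
  "finite I \<Longrightarrow> indicator_pairing m u (\<lambda>g. \<Sum>i\<in>I. c i * f i g) = (\<Sum>i\<in>I. c i * indicator_pairing m u (f i))"
  by (simp add: indicator_pairing_def sum_distrib_left sum.swap[of _ I] algebra_simps)

lemma indicator_pairing_smult_right: "indicator_pairing m u (\<lambda>g. c * v g) = c * indicator_pairing m u v"
  by (simp add: indicator_pairing_def sum_distrib_left mult.left_commute)

lemma qsubspace_indicator_pairing_kernel: "qsubspace {v. indicator_pairing m u v = 0}"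
  unfolding qsubspace_def indicator_pairing_def
  by (auto simp: distrib_left sum.distrib mult.left_commute[of _ "_ :: rat"] simp flip: sum_distrib_left)

lemma indicator_pairing_act:
  assumes "\<sigma> \<in> Sn (2*m)"
  shows "indicator_pairing m u (act_g \<sigma> v) = indicator_pairing m (act_g (Hilbert_Choice.inv \<sigma>) u) v"
proof -
  have \<sigma>: "\<sigma> permutes {1..2*m}" "bij \<sigma>"
    using assms by (simp_all add: Sn_def Sn_bij)
  have "indicator_pairing m u (act_g \<sigma> v)
      = (\<Sum>\<nu>\<in>Sn (2*m). u (matching_indicator m \<nu>) * v (matching_indicator m (Hilbert_Choice.inv \<sigma> \<circ> \<nu>)))"
    by (simp add: indicator_pairing_def act_g_at_matching_indicator[OF \<sigma>(2)])
  also have "\<dots> = (\<Sum>\<nu>\<in>Sn (2*m). u (matching_indicator m (\<sigma> \<circ> \<nu>)) * v (matching_indicator m \<nu>))"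
    unfolding Sn_def
    by (subst setum_permutations_compose_left[OF \<sigma>(1)])
       (simp add: o_assoc bij_is_inj[OF \<sigma>(2)] inv_o_cancel)
  also have "\<dots> = indicator_pairing m (act_g (Hilbert_Choice.inv \<sigma>) u) v"
    using \<sigma>(2) by (simp add: indicator_pairing_def act_g_at_matching_indicator bij_imp_bij_inv inv_inv_eq)
  finally show ?thesis .
qed

lemma indicator_pairing_col_antisymmetrizer:
  "indicator_pairing m u (col_antisymmetrizer m v) = indicator_pairing m (col_antisymmetrizer m u) v"
proof -
  have "indicator_pairing m u (col_antisymmetrizer m v)
      = (\<Sum>\<pi>\<in>col_group m. signof \<pi> * indicator_pairing m (act_g (Hilbert_Choice.inv \<pi>) u) v)"
    by (simp add: col_antisymmetrizer_def indicator_pairing_sum_right finite_col_group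
        indicator_pairing_act col_group_Sn)
  also have "\<dots> = (\<Sum>\<pi>\<in>col_group m. signof (Hilbert_Choice.inv \<pi>) * indicator_pairing m (act_g (Hilbert_Choice.inv \<pi>) u) v)"
    by (intro sum.cong refl) (simp add: sign_inverse col_group_permutation)
  also have "\<dots> = (\<Sum>\<pi>\<in>col_group m. signof \<pi> * indicator_pairing m (act_g \<pi> u) v)"
    by (rule sum.reindex_bij_betw[OF bij_betw_inv_col_group])
  also have "\<dots> = indicator_pairing m (col_antisymmetrizer m u) v"
    by (simp add: col_antisymmetrizer_def indicator_pairing_commute[of m _ v]
        indicator_pairing_sum_right finite_col_group)
  finally show ?thesis .
qed

lemma eq_zero_if_indicator_pairing_self_zero:
  assumes "u \<in> Vg m" "indicator_pairing m u u = 0"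
  shows "u = (\<lambda>g. 0)"
proof (rule eq_zero_if_vanishes_at_matching_indicators)
  show "u \<in> qspan (matching_monomial m ` Sn (2*m))"
    using assms(1) Vg_subset_span_matching_monomials by blast
  have "\<forall>\<nu>\<in>Sn (2*m). u (matching_indicator m \<nu>) * u (matching_indicator m \<nu>) = 0"
    using assms(2) by (simp add: indicator_pairing_def sum_nonneg_eq_0_iff finite_Sn)
  then show "u (matching_indicator m \<nu>) = 0" if "\<nu> \<in> Sn (2*m)" for \<nu>
    using that by simp
qed

lemma Vg_subset_if_col_antisymmetrizer_nonzero:
  assumes WV: "W \<subseteq> Vg m" and W: "qsubspace W" and inv: "\<forall>\<sigma>\<in>Sn (2*m). \<forall>w\<in>W. act_g \<sigma> w \<in> W"
    and w: "w \<in> W" and nonzero: "col_antisymmetrizer m w \<noteq> (\<lambda>g. 0)"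
  shows "Vg m \<subseteq> W"
proof -
  define c where "c = col_antisymmetrizer m w (matching_indicator m id)"
  have K_W: "col_antisymmetrizer m w \<in> W"
    by (rule col_antisymmetrizer_mem[OF W inv w])
  then have K_eq: "col_antisymmetrizer m w = (\<lambda>g. c * gmono m id g)"
    unfolding c_def using WV by (intro col_antisymmetric_in_Vg col_antisymmetric_col_antisymmetrizer) blast
  then have "c \<noteq> 0"
    using nonzero by auto
  then have "gmono m id = (\<lambda>g. (1 / c) * col_antisymmetrizer m w g)"
    by (simp add: K_eq)
  then have gmono_id_W: "gmono m id \<in> W"
    using qsubspace_smult[OF W K_W, of "1 / c"] by simp
  have "gmono m ` Sn (2*m) \<subseteq> W"
  proof
    fix f assume "f \<in> gmono m ` Sn (2*m)"
    then obtain \<sigma> where "\<sigma> \<in> Sn (2*m)" "f = act_g \<sigma> (gmono m id)"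
      by (auto simp: act_g_gmono)
    then show "f \<in> W"
      using inv gmono_id_W by blast
  qed
  then show ?thesis
    unfolding Vg_def by (rule qspan_least[OF W])
qed

lemma subset_zero_if_col_antisymmetrizer_vanishes:
  assumes WV: "W \<subseteq> Vg m" and inv: "\<forall>\<sigma>\<in>Sn (2*m). \<forall>w\<in>W. act_g \<sigma> w \<in> W"
    and zero: "\<And>w. w \<in> W \<Longrightarrow> col_antisymmetrizer m w = (\<lambda>g. 0)"
  shows "W \<subseteq> {\<lambda>g. 0}"
proof
  fix w assume w: "w \<in> W"
  define c :: rat where "c = of_nat (card (col_group m))"
  have "c \<noteq> 0"
    using id_col_group finite_col_group by (auto simp: c_def card_eq_0_iff)
  have "indicator_pairing m w (gmono m \<sigma>) = 0" if \<sigma>: "\<sigma> \<in> Sn (2*m)" for \<sigma>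
  proof -
    define w' where "w' = act_g (Hilbert_Choice.inv \<sigma>) w"
    have "w' \<in> W"
      unfolding w'_def using inv w Sn_inv[OF \<sigma>] by blast
    have "c * indicator_pairing m w (gmono m \<sigma>) = c * indicator_pairing m w' (gmono m id)"
      using indicator_pairing_act[OF \<sigma>, of w "gmono m id"] by (simp add: act_g_gmono w'_def)
    also have "\<dots> = indicator_pairing m w' (col_antisymmetrizer m (gmono m id))"
      by (simp add: col_antisymmetrizer_col_antisymmetric[OF col_antisymmetric_gmono_id]
          indicator_pairing_smult_right c_def)
    also have "\<dots> = indicator_pairing m (col_antisymmetrizer m w') (gmono m id)"
      by (rule indicator_pairing_col_antisymmetrizer)
    also have "\<dots> = 0"
      by (simp add: zero[OF \<open>w' \<in> W\<close>] indicator_pairing_def)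
    finally show ?thesis
      using \<open>c \<noteq> 0\<close> by simp
  qed
  then have "Vg m \<subseteq> {v. indicator_pairing m w v = 0}"
    unfolding Vg_def by (intro qspan_least qsubspace_indicator_pairing_kernel) auto
  then have "indicator_pairing m w w = 0"
    using w WV by blast
  then show "w \<in> {\<lambda>g. 0}"
    using eq_zero_if_indicator_pairing_self_zero w WV by blast
qed

lemma Vg_irreducible:
  assumes "W \<subseteq> Vg m" "qsubspace W" "\<forall>\<sigma>\<in>Sn (2*m). \<forall>w\<in>W. act_g \<sigma> w \<in> W"
  shows "W = {\<lambda>g. 0} \<or> W = Vg m"
proof (cases "\<exists>w\<in>W. col_antisymmetrizer m w \<noteq> (\<lambda>g. 0)")
  case True
  then show ?thesis
    using Vg_subset_if_col_antisymmetrizer_nonzero[OF assms] assms(1) by blast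
next
  case False
  then show ?thesis
    using subset_zero_if_col_antisymmetrizer_vanishes[OF assms(1,3)] qsubspace_zero[OF assms(2)] by blast
qed

lemma Vg_nonzero: "Vg m \<noteq> {\<lambda>g. 0}"
  using gmono_in_Vg[OF Sn_id, of m] gmono_id_at_indicator[of m] by auto

section \<open>The Vandermonde substitution\<close>

definition vandermonde_gram :: "nat \<Rightarrow> (nat \<Rightarrow> rat) \<Rightarrow> nat \<Rightarrow> nat \<Rightarrow> rat" where
  "vandermonde_gram m x i j = (\<Sum>k<m. x i ^ k * x j ^ k)"

lemma symm_vandermonde_gram: "symm (vandermonde_gram m x) = vandermonde_gram m x"
  by (rule symm_eq_self) (simp add: vandermonde_gram_def mult.commute)

lemma act_g_comp_vandermonde_gram: "act_g \<sigma> v \<circ> vandermonde_gram m = act_x \<sigma> (v \<circ> vandermonde_gram m)"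
proof -
  have "(\<lambda>i j. vandermonde_gram m x (\<sigma> i) (\<sigma> j)) = vandermonde_gram m (x \<circ> \<sigma>)" for x
    by (simp add: vandermonde_gram_def fun_eq_iff)
  then show ?thesis
    by (simp add: act_g_def act_x_def fun_eq_iff symm_vandermonde_gram)
qed

lemma prod_pairs_less:
  fixes n :: nat
  shows "(\<Prod>(p,q)\<in>{(p,q). p < q \<and> q < n}. f p q) = (\<Prod>q<n. \<Prod>p<q. f p q)"
proof -
  have pairs: "{(p,q). p < q \<and> q < n} = (\<lambda>(q,p). (p,q)) ` (SIGMA q:{..<n}. {..<q})"
    by auto
  have "inj_on (\<lambda>(q,p). (p,q)) (SIGMA q:{..<n}. {..<q})"
    by (auto simp: inj_on_def)
  then have "(\<Prod>(p,q)\<in>{(p,q). p < q \<and> q < n}. f p q) = (\<Prod>(q,p)\<in>(SIGMA q:{..<n}. {..<q}). f p q)"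
    unfolding pairs by (subst prod.reindex) (simp_all add: case_prod_unfold)
  also have "\<dots> = (\<Prod>q<n. \<Prod>p<q. f p q)"
    by (rule prod.Sigma[symmetric]) auto
  finally show ?thesis .
qed

lemma Delta_map_upt: "Delta (map \<sigma> [k..<k+n]) x = (\<Prod>q<n. \<Prod>p<q. x (\<sigma> (k + p)) - x (\<sigma> (k + q)))"
  unfolding Delta_def prod_pairs_less[symmetric]
  by (intro prod.cong) auto

lemma xmono_eq_prod:
  "xmono m \<sigma> x = (\<Prod>q<m. \<Prod>p<q. (x (\<sigma> (Suc p)) - x (\<sigma> (Suc q))) * (x (\<sigma> (Suc (m + p))) - x (\<sigma> (Suc (m + q)))))"
  using Delta_map_upt[of \<sigma> 1 m x] Delta_map_upt[of \<sigma> "Suc m" m x]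
  by (simp add: xmono_def blk1_def blk2_def prod.distrib mult_2 add.commute)

lemma gmono_comp_vandermonde_gram: "gmono m \<sigma> \<circ> vandermonde_gram m = xmono m \<sigma>"
proof
  fix x :: "nat \<Rightarrow> rat"
  define A where "A = mat m m (\<lambda>(i,j). x (\<sigma> (Suc i)) ^ j)"
  define B where "B = mat m m (\<lambda>(i,j). x (\<sigma> (Suc (m + i))) ^ j)"
  have A: "A \<in> carrier_mat m m" and B: "B \<in> carrier_mat m m"
    by (simp_all add: A_def B_def)
  have "(gmono m \<sigma> \<circ> vandermonde_gram m) x = det (A * transpose_mat B)"
    unfolding gmono_eq_det comp_def symm_vandermonde_gram
    by (intro arg_cong[where f = det] eq_matI)
       (auto simp: A_def B_def vandermonde_gram_def scalar_prod_def atLeast0LessThan)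
  also have "\<dots> = det A * det B"
    using det_mult[OF A transpose_carrier_mat[THEN iffD2, OF B]] det_transpose[OF B] by simp
  also have "\<dots> = (\<Prod>q<m. \<Prod>p<q. (x (\<sigma> (Suc q)) - x (\<sigma> (Suc p))) * (x (\<sigma> (Suc (m + q))) - x (\<sigma> (Suc (m + p)))))"
    by (simp add: A_def B_def det_vandermonde prod.distrib)
  also have "\<dots> = xmono m \<sigma> x"
    unfolding xmono_eq_prod by (intro prod.cong refl) (simp add: algebra_simps)
  finally show "(gmono m \<sigma> \<circ> vandermonde_gram m) x = xmono m \<sigma> x" .
qed

lemma xmono_id_nonzero: "xmono m id \<noteq> (\<lambda>x. 0)"
proof -
  have "xmono m id of_nat \<noteq> 0"
    by (simp add: xmono_eq_prod prod_zero_iff)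
  then show ?thesis
    by auto
qed

lemma image_Vg_comp_vandermonde_gram: "(\<lambda>v. v \<circ> vandermonde_gram m) ` Vg m = Specht2 m"
  unfolding Vg_def Specht2_def image_comp_qspan image_image gmono_comp_vandermonde_gram ..

lemma inj_on_Vg_comp_vandermonde_gram: "inj_on (\<lambda>v. v \<circ> vandermonde_gram m) (Vg m)"
proof (rule inj_on_comp_if_kernel_trivial[OF qsubspace_Vg])
  define K where "K = {v \<in> Vg m. v \<circ> vandermonde_gram m = (\<lambda>x. 0)}"
  have "qsubspace K"
    using qsubspace_Vg[of m] unfolding K_def qsubspace_def by (simp add: comp_def fun_eq_iff)
  moreover have "\<forall>\<sigma>\<in>Sn (2*m). \<forall>w\<in>K. act_g \<sigma> w \<in> K"
    using act_g_image_Vg by (auto simp: K_def act_g_comp_vandermonde_gram act_x_def)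
  moreover have "K \<noteq> Vg m"
  proof
    assume "K = Vg m"
    then have "gmono m id \<circ> vandermonde_gram m = (\<lambda>x. 0)"
      using gmono_in_Vg[OF Sn_id, of m] unfolding K_def by blast
    then show False
      using xmono_id_nonzero[of m] by (simp add: gmono_comp_vandermonde_gram)
  qed
  ultimately have "K = {\<lambda>g. 0}"
    using Vg_irreducible[of K m] by (auto simp: K_def)
  then show "v = (\<lambda>g. 0)" if "v \<in> Vg m" "v \<circ> vandermonde_gram m = (\<lambda>x. 0)" for v
    using that by (auto simp: K_def)
qed

theorem mainTheorem3:
  fixes m :: nat
  shows "(\<forall>\<sigma>\<in>Sn (2*m). \<forall>v\<in>Vg m. act_g \<sigma> v \<in> Vg m)
    \<and> Vg m \<noteq> {\<lambda>g. 0}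
    \<and> (\<forall>W. W \<subseteq> Vg m \<and> qsubspace W \<and> (\<forall>\<sigma>\<in>Sn (2*m). \<forall>w\<in>W. act_g \<sigma> w \<in> W)
           \<longrightarrow> W = {\<lambda>g. 0} \<or> W = Vg m)
    \<and> (\<exists>\<Phi>. qlinear_on (Vg m) \<Phi> \<and> inj_on \<Phi> (Vg m) \<and> \<Phi> ` Vg m = Specht2 m
           \<and> (\<forall>\<sigma>\<in>Sn (2*m). \<Phi> (gmono m \<sigma>) = xmono m \<sigma>)
           \<and> (\<forall>\<sigma>\<in>Sn (2*m). \<forall>v\<in>Vg m. \<Phi> (act_g \<sigma> v) = act_x \<sigma> (\<Phi> v)))"
proof (intro conjI)
  show "\<forall>\<sigma>\<in>Sn (2*m). \<forall>v\<in>Vg m. act_g \<sigma> v \<in> Vg m"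
    using act_g_image_Vg by blast
  show "Vg m \<noteq> {\<lambda>g. 0}"
    by (rule Vg_nonzero)
  show "\<forall>W. W \<subseteq> Vg m \<and> qsubspace W \<and> (\<forall>\<sigma>\<in>Sn (2*m). \<forall>w\<in>W. act_g \<sigma> w \<in> W)
      \<longrightarrow> W = {\<lambda>g. 0} \<or> W = Vg m"
    using Vg_irreducible by blast
  show "\<exists>\<Phi>. qlinear_on (Vg m) \<Phi> \<and> inj_on \<Phi> (Vg m) \<and> \<Phi> ` Vg m = Specht2 m
      \<and> (\<forall>\<sigma>\<in>Sn (2*m). \<Phi> (gmono m \<sigma>) = xmono m \<sigma>)
      \<and> (\<forall>\<sigma>\<in>Sn (2*m). \<forall>v\<in>Vg m. \<Phi> (act_g \<sigma> v) = act_x \<sigma> (\<Phi> v))"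
    by (intro exI[of _ "\<lambda>v. v \<circ> vandermonde_gram m"] conjI ballI qlinear_on_comp
        inj_on_Vg_comp_vandermonde_gram image_Vg_comp_vandermonde_gram
        gmono_comp_vandermonde_gram act_g_comp_vandermonde_gram)
qed

end
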